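(* Let $(X,T)$ be a minimal topological dynamical system. Then $(X,T)$ is mean equicontinuous if and only if it is equicontinuous in the mean.
   Context: A t.d.s. $(X,T)$ consists of a compact metric space $(X,d)$ and a continuous map $T\colon X\to X$; it is minimal if every orbit $\{x,Tx,T^2x,\dots\}$ is dense in $X$. Let $\bar d_n(x,y)=\frac1n\sum_{i=0}^{n-1}d(T^ix,T^iy)$. $(X,T)$ is mean equicontinuous if for every $\varepsilon>0$ there is $\delta>0$ such that $d(x,y)<\delta$ implies $\limsup_{n\to\infty}\bar d_n(x,y)<\varepsilon$. $(X,T)$ is equicontinuous in the mean if for every $\varepsilon>0$ there is $\delta>0$ such that $d(x,y)<\delta$ implies $\bar d_n(x,y)<\varepsilon$ for every $n\in\mathbb{N}$. *)

theory Defs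
  imports "HOL-Analysis.Analysis"
begin

definition tds :: "'a::metric_space set \<Rightarrow> ('a \<Rightarrow> 'a) \<Rightarrow> bool" where
  "tds X T \<longleftrightarrow> compact X \<and> continuous_on X T \<and> T ` X \<subseteq> X"

definition minimal_tds :: "'a::metric_space set \<Rightarrow> ('a \<Rightarrow> 'a) \<Rightarrow> bool" where
  "minimal_tds X T \<longleftrightarrow> tds X T \<and>
     (\<forall>x\<in>X. closure (range (\<lambda>n. (T ^^ n) x)) = X)"

definition dbar :: "('a::metric_space \<Rightarrow> 'a) \<Rightarrow> nat \<Rightarrow> 'a \<Rightarrow> 'a \<Rightarrow> real" where
  "dbar T n x y = (\<Sum>i<n. dist ((T ^^ i) x) ((T ^^ i) y)) / real n"

definition mean_equicontinuous :: "'a::metric_space set \<Rightarrow> ('a \<Rightarrow> 'a) \<Rightarrow> bool" where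
  "mean_equicontinuous X T \<longleftrightarrow>
     (\<forall>\<epsilon>>0. \<exists>\<delta>>0. \<forall>x\<in>X. \<forall>y\<in>X. dist x y < \<delta> \<longrightarrow>
        limsup (\<lambda>n. ereal (dbar T n x y)) < ereal \<epsilon>)"

definition equicontinuous_in_mean :: "'a::metric_space set \<Rightarrow> ('a \<Rightarrow> 'a) \<Rightarrow> bool" where
  "equicontinuous_in_mean X T \<longleftrightarrow>
     (\<forall>\<epsilon>>0. \<exists>\<delta>>0. \<forall>x\<in>X. \<forall>y\<in>X. dist x y < \<delta> \<longrightarrow>
        (\<forall>n\<ge>1. dbar T n x y < \<epsilon>))"

end

theory Submission
  imports Defs
begin

text \<open>
  The limsup \<open>D(x, y)\<close> of the mean distances is \<open>T\<close>-invariant and, under mean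
  equicontinuity, continuous, while each \<open>dbar T N\<close> is continuous. Hence every pair
  \<open>(x, y)\<close> has a time \<open>N \<le> M\<close> with \<open>dbar T N x y < D(x, y) + \<eta>\<close>, where \<open>M\<close> is uniform
  on the compact space \<open>X \<times> X\<close>. Cutting an orbit segment of length \<open>n\<close> into such blocks gives
  \<open>dbar T n x y \<le> D(x, y) + \<eta> + M diam X / n\<close>, which is uniformly small for close points
  and large \<open>n\<close>; the finitely many small \<open>n\<close> are handled by continuity of \<open>T\<close>.
\<close>

lemma sum_lessThan_add_nat:
  fixes f :: "nat \<Rightarrow> 'b::comm_monoid_add"
  shows "(\<Sum>i<a + b. f i) = (\<Sum>i<a. f i) + (\<Sum>i<b. f (i + a))"
  by (induction b) (simp_all add: add_ac)

lemma dbar_nonneg: "0 \<le> dbar T n x y"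
  unfolding dbar_def by (simp add: sum_nonneg)

lemma sum_dist_iterates_eq_dbar: "(\<Sum>i<n. dist ((T ^^ i) x) ((T ^^ i) y)) = real n * dbar T n x y"
  unfolding dbar_def by simp

lemma dbar_triangle: "dbar T n x z \<le> dbar T n x y + dbar T n y z"
proof -
  have "(\<Sum>i<n. dist ((T ^^ i) x) ((T ^^ i) z))
      \<le> (\<Sum>i<n. dist ((T ^^ i) x) ((T ^^ i) y) + dist ((T ^^ i) y) ((T ^^ i) z))"
    by (rule sum_mono) (rule dist_triangle)
  then show ?thesis
    unfolding dbar_def sum.distrib add_divide_distrib[symmetric] by (simp add: divide_right_mono)
qed

lemma dbar_less:
  assumes "n \<ge> 1" "\<And>i. i < n \<Longrightarrow> dist ((T ^^ i) x) ((T ^^ i) y) < \<epsilon>"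
  shows "dbar T n x y < \<epsilon>"
proof -
  have "(\<Sum>i<n. dist ((T ^^ i) x) ((T ^^ i) y)) < (\<Sum>i<n. \<epsilon>)"
    by (rule sum_strict_mono) (use assms in \<open>auto simp: lessThan_empty_iff\<close>)
  then show ?thesis
    using assms(1) unfolding dbar_def by (simp add: divide_less_eq mult.commute)
qed

lemma dbar_Suc:
  "dbar T (Suc n) x y = (dist x y + real n * dbar T n (T x) (T y)) / real (Suc n)"
proof -
  have "(\<Sum>i<Suc n. dist ((T ^^ i) x) ((T ^^ i) y))
      = dist x y + (\<Sum>i<n. dist ((T ^^ i) (T x)) ((T ^^ i) (T y)))"
    by (subst sum.lessThan_Suc_shift) (simp add: funpow_Suc_right del: funpow.simps)
  then show ?thesis
    unfolding dbar_def by simp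
qed

lemma limsup_dbar_nonneg: "0 \<le> limsup (\<lambda>n. ereal (dbar T n x y))"
proof -
  have "0 \<le> liminf (\<lambda>n. ereal (dbar T n x y))"
    by (rule Liminf_bounded) (simp add: dbar_nonneg)
  also have "\<dots> \<le> limsup (\<lambda>n. ereal (dbar T n x y))"
    by (rule Liminf_le_Limsup) simp
  finally show ?thesis .
qed

lemma equicontinuous_in_mean_imp_mean_equicontinuous:
  assumes "equicontinuous_in_mean X T"
  shows "mean_equicontinuous X T"
  unfolding mean_equicontinuous_def
proof (intro allI impI)
  fix \<epsilon> :: real assume "\<epsilon> > 0"
  then obtain \<delta> where "\<delta> > 0" and \<delta>: "\<forall>x\<in>X. \<forall>y\<in>X. dist x y < \<delta> \<longrightarrow> (\<forall>n\<ge>1. dbar T n x y < \<epsilon>/2)"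
    using assms unfolding equicontinuous_in_mean_def by (meson half_gt_zero)
  have "limsup (\<lambda>n. ereal (dbar T n x y)) < ereal \<epsilon>"
    if "x \<in> X" "y \<in> X" "dist x y < \<delta>" for x y
  proof -
    have "limsup (\<lambda>n. ereal (dbar T n x y)) \<le> ereal (\<epsilon>/2)"
      by (rule Limsup_bounded)
        (use \<delta> that in \<open>auto simp: eventually_sequentially intro!: exI[of _ 1] less_imp_le\<close>)
    also have "\<dots> < ereal \<epsilon>" using \<open>\<epsilon> > 0\<close> by simp
    finally show ?thesis .
  qed
  with \<open>\<delta> > 0\<close> show "\<exists>\<delta>>0. \<forall>x\<in>X. \<forall>y\<in>X. dist x y < \<delta> \<longrightarrow>
      limsup (\<lambda>n. ereal (dbar T n x y)) < ereal \<epsilon>" by blast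
qed

definition mean_dist :: "('a::metric_space \<Rightarrow> 'a) \<Rightarrow> 'a \<Rightarrow> 'a \<Rightarrow> real" where
  "mean_dist T x y = real_of_ereal (limsup (\<lambda>n. ereal (dbar T n x y)))"

locale dynamical_system =
  fixes X :: "'a::metric_space set" and T :: "'a \<Rightarrow> 'a"
  assumes tds: "tds X T"
begin

lemma funpow_in: "x \<in> X \<Longrightarrow> (T ^^ i) x \<in> X"
  using tds unfolding tds_def by (induction i) auto

lemma continuous_on_funpow: "continuous_on X (T ^^ i)"
proof (induction i)
  case 0 then show ?case by (simp add: continuous_on_id)
next
  case (Suc i)
  have "continuous_on X (T \<circ> (T ^^ i))"
    using tds funpow_in unfolding tds_def
    by (intro continuous_on_compose[OF Suc.IH]) (meson continuous_on_subset image_subset_iff)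
  then show ?case by simp
qed

lemma dist_le_diameter: "x \<in> X \<Longrightarrow> y \<in> X \<Longrightarrow> dist x y \<le> diameter X"
  using tds unfolding tds_def by (simp add: compact_imp_bounded diameter_bounded_bound)

lemma diameter_nonneg: "0 \<le> diameter X"
  using tds unfolding tds_def by (simp add: compact_imp_bounded diameter_ge_0)

lemma uniformly_close_iterates:
  assumes "\<eta> > 0"
  shows "\<exists>\<rho>>0. \<forall>x\<in>X. \<forall>y\<in>X. dist x y < \<rho> \<longrightarrow> (\<forall>i<N. dist ((T ^^ i) x) ((T ^^ i) y) < \<eta>)"
proof (induction N)
  case 0 then show ?case by (intro exI[of _ 1]) auto
next
  case (Suc N)
  then obtain \<rho> where "\<rho> > 0"
    and \<rho>: "\<forall>x\<in>X. \<forall>y\<in>X. dist x y < \<rho> \<longrightarrow> (\<forall>i<N. dist ((T ^^ i) x) ((T ^^ i) y) < \<eta>)"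
    by blast
  have "uniformly_continuous_on X (T ^^ N)"
    using tds continuous_on_funpow compact_uniformly_continuous unfolding tds_def by blast
  then obtain r where "r > 0" and r: "\<forall>x\<in>X. \<forall>y\<in>X. dist y x < r \<longrightarrow> dist ((T ^^ N) y) ((T ^^ N) x) < \<eta>"
    unfolding uniformly_continuous_on_def using assms by blast
  show ?case
    using \<open>\<rho> > 0\<close> \<open>r > 0\<close> \<rho> r
    by (intro exI[of _ "min \<rho> r"]) (auto simp: less_Suc_eq dist_commute)
qed

lemma dbar_le_diameter:
  assumes "x \<in> X" "y \<in> X"
  shows "dbar T n x y \<le> diameter X"
proof (cases "n = 0")
  case True then show ?thesis using diameter_nonneg by (simp add: dbar_def)
next
  case False
  have "(\<Sum>i<n. dist ((T ^^ i) x) ((T ^^ i) y)) \<le> (\<Sum>i<n. diameter X)"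
    by (rule sum_mono) (use assms funpow_in dist_le_diameter in simp)
  then show ?thesis using False unfolding dbar_def by (simp add: divide_le_eq mult.commute)
qed

lemma limsup_dbar_eq_mean_dist:
  assumes "x \<in> X" "y \<in> X"
  shows "limsup (\<lambda>n. ereal (dbar T n x y)) = ereal (mean_dist T x y)"
proof -
  have "limsup (\<lambda>n. ereal (dbar T n x y)) \<le> ereal (diameter X)"
    by (rule Limsup_bounded) (use dbar_le_diameter[OF assms] in simp)
  with limsup_dbar_nonneg[of T x y] show ?thesis
    unfolding mean_dist_def by (cases "limsup (\<lambda>n. ereal (dbar T n x y))") auto
qed

lemma mean_dist_nonneg: "x \<in> X \<Longrightarrow> y \<in> X \<Longrightarrow> 0 \<le> mean_dist T x y"
  using limsup_dbar_nonneg[of T x y] limsup_dbar_eq_mean_dist by simp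

lemma mean_dist_triangle:
  assumes "x \<in> X" "y \<in> X" "z \<in> X"
  shows "mean_dist T x z \<le> mean_dist T x y + mean_dist T y z"
proof -
  have "limsup (\<lambda>n. ereal (dbar T n x z))
      \<le> limsup (\<lambda>n. ereal (dbar T n x y) + ereal (dbar T n y z))"
    by (rule Limsup_mono) (simp add: dbar_triangle)
  also have "\<dots> \<le> limsup (\<lambda>n. ereal (dbar T n x y)) + limsup (\<lambda>n. ereal (dbar T n y z))"
    by (rule ereal_limsup_add_mono)
  finally show ?thesis
    using assms by (simp add: limsup_dbar_eq_mean_dist)
qed

lemma mean_dist_step:
  assumes "x \<in> X" "y \<in> X"
  shows "mean_dist T (T x) (T y) = mean_dist T x y"
proof -
  have "T x \<in> X" "T y \<in> X"
    using assms funpow_in[of _ 1] by auto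
  define a where "a n = dbar T n (T x) (T y)" for n
  define e where "e n = (dist x y - a n) / real (Suc n)" for n
  have shift: "dbar T (Suc n) x y = e n + a n" for n
  proof -
    have "dbar T (Suc n) x y = (dist x y + real n * a n) / real (Suc n)"
      unfolding a_def using dbar_Suc by simp
    then show ?thesis
      unfolding e_def by (simp add: field_simps)
  qed
  have "e \<longlonglongrightarrow> 0"
  proof (rule tendsto_0_le[OF LIMSEQ_inverse_real_of_nat always_eventually], intro allI)
    fix n
    have "\<bar>dist x y - a n\<bar> \<le> diameter X"
      using dist_le_diameter[OF assms] dbar_le_diameter[OF \<open>T x \<in> X\<close> \<open>T y \<in> X\<close>, of n]
        dbar_nonneg[of T n "T x" "T y"] zero_le_dist[of x y] unfolding a_def by linarith
    then have "\<bar>dist x y - a n\<bar> * inverse (real (Suc n)) \<le> diameter X * inverse (real (Suc n))"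
      by (rule mult_right_mono) simp
    then show "norm (e n) \<le> norm (inverse (real (Suc n))) * diameter X"
      unfolding e_def divide_inverse by (simp add: abs_mult)
  qed
  then have "(\<lambda>n. ereal (e n)) \<longlonglongrightarrow> ereal 0"
    by (rule tendsto_ereal)
  then have "limsup (\<lambda>n. ereal (a n)) = limsup (\<lambda>n. ereal (e n) + ereal (a n))"
    by (subst ereal_limsup_lim_add) auto
  also have "limsup (\<lambda>n. ereal (e n) + ereal (a n)) = limsup (\<lambda>n. ereal (dbar T (n + 1) x y))"
    by (simp add: shift)
  also have "\<dots> = limsup (\<lambda>n. ereal (dbar T n x y))"
    by (rule limsup_shift)
  finally show ?thesis
    using assms \<open>T x \<in> X\<close> \<open>T y \<in> X\<close> unfolding a_def
    by (simp add: limsup_dbar_eq_mean_dist)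
qed

lemma mean_dist_funpow:
  "x \<in> X \<Longrightarrow> y \<in> X \<Longrightarrow> mean_dist T ((T ^^ k) x) ((T ^^ k) y) = mean_dist T x y"
proof (induction k)
  case 0 then show ?case by simp
next
  case (Suc k)
  then show ?case
    using mean_dist_step[of "(T ^^ k) x" "(T ^^ k) y"] funpow_in by simp
qed

lemma mean_dist_less_if_close:
  assumes "mean_equicontinuous X T" "\<epsilon> > 0"
  obtains \<delta> where "\<delta> > 0" "\<And>x y. x \<in> X \<Longrightarrow> y \<in> X \<Longrightarrow> dist x y < \<delta> \<Longrightarrow> mean_dist T x y < \<epsilon>"
proof -
  obtain \<delta> where "\<delta> > 0"
    and "\<forall>x\<in>X. \<forall>y\<in>X. dist x y < \<delta> \<longrightarrow> limsup (\<lambda>n. ereal (dbar T n x y)) < ereal \<epsilon>"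
    using assms unfolding mean_equicontinuous_def by blast
  then show ?thesis
    by (intro that[of \<delta>]) (auto simp: limsup_dbar_eq_mean_dist)
qed

lemma exists_dbar_less_mean_dist:
  assumes "x \<in> X" "y \<in> X" "\<eta> > 0"
  shows "\<exists>N\<ge>1. dbar T N x y < mean_dist T x y + \<eta>"
proof -
  have "limsup (\<lambda>n. ereal (dbar T n x y)) < ereal (mean_dist T x y + \<eta>)"
    using assms by (simp add: limsup_dbar_eq_mean_dist)
  then have "eventually (\<lambda>n. ereal (dbar T n x y) < ereal (mean_dist T x y + \<eta>)) sequentially"
    by (rule Limsup_lessD)
  then obtain N0 where "\<forall>n\<ge>N0. dbar T n x y < mean_dist T x y + \<eta>"
    unfolding eventually_sequentially by auto
  then show ?thesis by (intro exI[of _ "max N0 1"]) auto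
qed

text \<open>A time that is good for \<open>(x, y)\<close> stays good near \<open>(x, y)\<close>, since \<open>dbar T N\<close> is
  continuous for fixed \<open>N\<close> and \<open>mean_dist T\<close> is continuous by mean equicontinuity.\<close>

lemma good_time_near:
  assumes "mean_equicontinuous X T" "x \<in> X" "y \<in> X" "\<eta> > 0"
  shows "\<exists>N\<ge>1. \<exists>r>0. \<forall>x'\<in>X. \<forall>y'\<in>X. dist x x' < r \<longrightarrow> dist y y' < r \<longrightarrow>
           dbar T N x' y' < mean_dist T x' y' + \<eta>"
proof -
  obtain \<delta> where "\<delta> > 0" and D_small: "\<And>x y. x \<in> X \<Longrightarrow> y \<in> X \<Longrightarrow> dist x y < \<delta> \<Longrightarrow> mean_dist T x y < \<eta>/5"
    using mean_dist_less_if_close[OF assms(1), of "\<eta>/5"] assms(4) by auto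
  obtain N where "N \<ge> 1" and N: "dbar T N x y < mean_dist T x y + \<eta>/5"
    using exists_dbar_less_mean_dist[OF assms(2,3), of "\<eta>/5"] assms(4) by auto
  obtain \<rho> where "\<rho> > 0"
    and \<rho>: "\<forall>x\<in>X. \<forall>y\<in>X. dist x y < \<rho> \<longrightarrow> (\<forall>i<N. dist ((T ^^ i) x) ((T ^^ i) y) < \<eta>/5)"
    using uniformly_close_iterates[of "\<eta>/5" N] assms(4) by auto
  have dbar_small: "dbar T N a b < \<eta>/5" if "a \<in> X" "b \<in> X" "dist a b < \<rho>" for a b
    using \<open>N \<ge> 1\<close> \<rho> that by (intro dbar_less) auto
  have "dbar T N x' y' < mean_dist T x' y' + \<eta>"
    if x'y': "x' \<in> X" "y' \<in> X" "dist x x' < min \<delta> \<rho>" "dist y y' < min \<delta> \<rho>" for x' y'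
  proof -
    have "dbar T N x' y' \<le> dbar T N x' x + dbar T N x y + dbar T N y y'"
      using dbar_triangle[of T N x' y' x] dbar_triangle[of T N x y' y] by simp
    moreover have "mean_dist T x y \<le> mean_dist T x x' + mean_dist T x' y' + mean_dist T y' y"
      using mean_dist_triangle[of x x' y] mean_dist_triangle[of x' y' y] assms x'y' by simp
    moreover have "dbar T N x' x < \<eta>/5" "dbar T N y y' < \<eta>/5"
      using dbar_small assms x'y' by (auto simp: dist_commute)
    moreover have "mean_dist T x x' < \<eta>/5" "mean_dist T y' y < \<eta>/5"
      using D_small assms x'y' by (auto simp: dist_commute)
    ultimately show ?thesis
      using N by linarith
  qed
  with \<open>N \<ge> 1\<close> \<open>\<delta> > 0\<close> \<open>\<rho> > 0\<close> show ?thesis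
    by (intro exI[of _ N] conjI exI[of _ "min \<delta> \<rho>"]) auto
qed

lemma uniform_good_times:
  assumes "mean_equicontinuous X T" "\<eta> > 0"
  shows "\<exists>M. \<forall>x\<in>X. \<forall>y\<in>X. \<exists>N. 1 \<le> N \<and> N \<le> M \<and> dbar T N x y < mean_dist T x y + \<eta>"
proof -
  have "\<exists>N r. N \<ge> 1 \<and> r > 0 \<and>
      (\<forall>x'\<in>X. \<forall>y'\<in>X. dist (fst p) x' < r \<longrightarrow> dist (snd p) y' < r \<longrightarrow>
         dbar T N x' y' < mean_dist T x' y' + \<eta>)" if "p \<in> X \<times> X" for p
    using good_time_near[OF assms(1) _ _ assms(2), of "fst p" "snd p"] that by auto
  then obtain Nf r where good: "\<And>p. p \<in> X \<times> X \<Longrightarrow> Nf p \<ge> 1 \<and> r p > 0 \<and>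
      (\<forall>x'\<in>X. \<forall>y'\<in>X. dist (fst p) x' < r p \<longrightarrow> dist (snd p) y' < r p \<longrightarrow>
         dbar T (Nf p) x' y' < mean_dist T x' y' + \<eta>)"
    by metis
  let ?U = "\<lambda>p. ball (fst p) (r p) \<times> ball (snd p) (r p)"
  have "compact (X \<times> X)"
    using tds unfolding tds_def by (simp add: compact_Times)
  moreover have "X \<times> X \<subseteq> (\<Union>p\<in>X \<times> X. ?U p)"
    using good by (auto simp: mem_Times_iff)
  ultimately obtain K where K: "K \<subseteq> X \<times> X" "finite K" "X \<times> X \<subseteq> (\<Union>p\<in>K. ?U p)"
    using compactE_image[of "X \<times> X" "X \<times> X" ?U] by (auto simp: open_Times)
  have "\<exists>N. 1 \<le> N \<and> N \<le> Max (Nf ` K) \<and> dbar T N x y < mean_dist T x y + \<eta>"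
    if xy: "x \<in> X" "y \<in> X" for x y
  proof -
    obtain p where "p \<in> K" "(x, y) \<in> ?U p"
      using K(3) xy by blast
    then show ?thesis
      using good[of p] K(1,2) xy by (intro exI[of _ "Nf p"]) (auto simp: dist_commute)
  qed
  then show ?thesis by blast
qed

text \<open>Cutting the orbit segment of length \<open>n\<close> into consecutive good blocks of length at most
  \<open>M\<close>, each of which restarts at an iterate pair with the same \<open>D\<close>-value; the last,
  incomplete block costs at most \<open>M diam X\<close>.\<close>

lemma sum_dist_le_by_good_times:
  fixes D :: "'a \<Rightarrow> 'a \<Rightarrow> real"
  assumes D_funpow: "\<And>x y k. x \<in> X \<Longrightarrow> y \<in> X \<Longrightarrow> D ((T ^^ k) x) ((T ^^ k) y) = D x y"
    and D_nonneg: "\<And>x y. x \<in> X \<Longrightarrow> y \<in> X \<Longrightarrow> 0 \<le> D x y" and "\<eta> \<ge> 0"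
    and good: "\<And>x y. x \<in> X \<Longrightarrow> y \<in> X \<Longrightarrow> \<exists>N. 1 \<le> N \<and> N \<le> M \<and> dbar T N x y < D x y + \<eta>"
    and "x \<in> X" "y \<in> X"
  shows "(\<Sum>i<n. dist ((T ^^ i) x) ((T ^^ i) y)) \<le> real n * (D x y + \<eta>) + real M * diameter X"
  using \<open>x \<in> X\<close> \<open>y \<in> X\<close>
proof (induction n arbitrary: x y rule: less_induct)
  case (less n)
  show ?case
  proof (cases "n \<le> M")
    case True
    have "(\<Sum>i<n. dist ((T ^^ i) x) ((T ^^ i) y)) \<le> (\<Sum>i<n. diameter X)"
      by (rule sum_mono) (use less.prems funpow_in dist_le_diameter in simp)
    also have "\<dots> \<le> real M * diameter X"
      using True diameter_nonneg by (simp add: mult_right_mono)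
    also have "\<dots> \<le> real n * (D x y + \<eta>) + real M * diameter X"
      using D_nonneg[OF less.prems] \<open>\<eta> \<ge> 0\<close> by simp
    finally show ?thesis .
  next
    case False
    obtain N where N: "1 \<le> N" "N \<le> M" "dbar T N x y < D x y + \<eta>"
      using good[OF less.prems] by blast
    let ?x = "(T ^^ N) x" and ?y = "(T ^^ N) y"
    have n_split: "n = N + (n - N)"
      using False N by simp
    have "(\<Sum>i<n. dist ((T ^^ i) x) ((T ^^ i) y))
        = real N * dbar T N x y + (\<Sum>i<n - N. dist ((T ^^ i) ?x) ((T ^^ i) ?y))"
      by (subst n_split, subst sum_lessThan_add_nat)
        (simp add: sum_dist_iterates_eq_dbar funpow_add)
    also have "\<dots> \<le> real N * (D x y + \<eta>) + (real (n - N) * (D ?x ?y + \<eta>) + real M * diameter X)"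
      using N False less.prems funpow_in by (intro add_mono mult_left_mono less.IH) auto
    also have "\<dots> = real n * (D x y + \<eta>) + real M * diameter X"
      using D_funpow[OF less.prems] False N by (simp add: algebra_simps of_nat_diff)
    finally show ?thesis .
  qed
qed

lemma dbar_le_mean_dist_uniformly:
  assumes "mean_equicontinuous X T" "\<eta> > 0"
  obtains C where "\<And>x y n. x \<in> X \<Longrightarrow> y \<in> X \<Longrightarrow> n \<ge> 1 \<Longrightarrow>
    dbar T n x y \<le> mean_dist T x y + \<eta> + C / real n"
proof -
  obtain M where "\<forall>x\<in>X. \<forall>y\<in>X. \<exists>N. 1 \<le> N \<and> N \<le> M \<and> dbar T N x y < mean_dist T x y + \<eta>"
    using uniform_good_times[OF assms] by blast
  then have sum_le: "(\<Sum>i<n. dist ((T ^^ i) x) ((T ^^ i) y))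
      \<le> real n * (mean_dist T x y + \<eta>) + real M * diameter X" if "x \<in> X" "y \<in> X" for x y n
    using that assms(2)
    by (intro sum_dist_le_by_good_times mean_dist_funpow mean_dist_nonneg) auto
  have "dbar T n x y \<le> mean_dist T x y + \<eta> + real M * diameter X / real n"
    if "x \<in> X" "y \<in> X" "n \<ge> 1" for x y n
    using sum_le[OF that(1,2), of n] that(3)
    unfolding sum_dist_iterates_eq_dbar by (simp add: field_simps)
  then show ?thesis
    by (rule that)
qed

lemma mean_equicontinuous_imp_equicontinuous_in_mean:
  assumes "mean_equicontinuous X T"
  shows "equicontinuous_in_mean X T"
  unfolding equicontinuous_in_mean_def
proof (intro allI impI)
  fix \<epsilon> :: real assume "\<epsilon> > 0"
  obtain C where C: "\<And>x y n. x \<in> X \<Longrightarrow> y \<in> X \<Longrightarrow> n \<ge> 1 \<Longrightarrow>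
      dbar T n x y \<le> mean_dist T x y + \<epsilon>/3 + C / real n"
    using dbar_le_mean_dist_uniformly[OF assms, of "\<epsilon>/3"] \<open>\<epsilon> > 0\<close> by auto
  obtain \<delta>0 where "\<delta>0 > 0"
    and D_small: "\<And>x y. x \<in> X \<Longrightarrow> y \<in> X \<Longrightarrow> dist x y < \<delta>0 \<Longrightarrow> mean_dist T x y < \<epsilon>/3"
    using mean_dist_less_if_close[OF assms, of "\<epsilon>/3"] \<open>\<epsilon> > 0\<close> by auto
  obtain N0 :: nat where N0: "3 * C / \<epsilon> < real N0"
    using reals_Archimedean2 by blast
  obtain \<delta>1 where "\<delta>1 > 0"
    and \<delta>1: "\<forall>x\<in>X. \<forall>y\<in>X. dist x y < \<delta>1 \<longrightarrow> (\<forall>i<N0. dist ((T ^^ i) x) ((T ^^ i) y) < \<epsilon>)"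
    using uniformly_close_iterates[OF \<open>\<epsilon> > 0\<close>] by blast
  have "dbar T n x y < \<epsilon>"
    if xy: "x \<in> X" "y \<in> X" "dist x y < min \<delta>0 \<delta>1" and "n \<ge> 1" for x y n
  proof (cases "n < N0")
    case True
    then show ?thesis
      using \<open>n \<ge> 1\<close> \<delta>1 xy by (intro dbar_less) auto
  next
    case False
    then have "\<epsilon> * real N0 \<le> \<epsilon> * real n"
      using \<open>\<epsilon> > 0\<close> by (intro mult_left_mono) auto
    moreover have "3 * C < \<epsilon> * real N0"
      using N0 \<open>\<epsilon> > 0\<close> by (simp add: field_simps)
    ultimately have "3 * C < \<epsilon> * real n"
      by linarith
    then have "C / real n < \<epsilon>/3"
      using \<open>n \<ge> 1\<close> by (simp add: field_simps)
    then show ?thesis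
      using C[OF xy(1,2) \<open>n \<ge> 1\<close>] D_small[OF xy(1,2)] xy(3) by linarith
  qed
  with \<open>\<delta>0 > 0\<close> \<open>\<delta>1 > 0\<close> show "\<exists>\<delta>>0. \<forall>x\<in>X. \<forall>y\<in>X. dist x y < \<delta> \<longrightarrow> (\<forall>n\<ge>1. dbar T n x y < \<epsilon>)"
    by (intro exI[of _ "min \<delta>0 \<delta>1"]) auto
qed

end

theorem mainTheorem4:
  fixes X :: "'a::metric_space set" and T :: "'a \<Rightarrow> 'a"
  assumes "minimal_tds X T"
  shows "mean_equicontinuous X T \<longleftrightarrow> equicontinuous_in_mean X T"
proof -
  interpret dynamical_system X T
    using assms unfolding minimal_tds_def by unfold_locales simp
  show ?thesis
    using mean_equicontinuous_imp_equicontinuous_in_mean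
      equicontinuous_in_mean_imp_mean_equicontinuous by blast
qed

end
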